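(* Let $\alpha_0,\dots,\alpha_{L-1}$ be i.i.d. uniform on $(-\tfrac12,\tfrac12)$, extended $L$-periodically; let $\omega_i=\Delta\alpha_i-[\![\Delta\alpha_i]\!]$, $S=\sum_{i=0}^{L-1}[\![\Delta\alpha_i]\!]$, and let $\sigma$ be the permutation of $\{0,\dots,L-1\}$ with $\omega_{\sigma(0)}<\dots<\omega_{\sigma(L-1)}$. Define $J'_i=-\mathbf 1(i\in\sigma\{L-|S|,\dots,L-1\})$ if $S<0$, $J'_i=0$ if $S=0$, and $J'_i=\mathbf 1(i\in\sigma\{0,\dots,S-1\})$ if $S>0$, and let $$d\equiv\sum_{i=0}^{L-1}i\left([\![\Delta\alpha_i]\!]-J'_i\right)\pmod L,\qquad d\in\{0,\dots,L-1\}.$$ Then $d$ is uniformly distributed on $\{0,\dots,L-1\}$ and independent of $\vec\omega=(\omega_0,\dots,\omega_{L-1})$.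
   Context: $\Delta$ is the periodic discrete Laplacian, $\Delta\alpha_i=\alpha_{i-1}-2\alpha_i+\alpha_{i+1}$ with indices mod $L$; $[\![x]\!]$ is the integer nearest to $x$; $\sigma\{a,\dots,b\}$ denotes the image of the index set $\{a,\dots,b\}$ under $\sigma$; $\mathbf 1(\cdot)$ is the indicator function. *)

theory Defs
  imports "HOL-Probability.Probability"
begin

definition lap :: "nat \<Rightarrow> (nat \<Rightarrow> real) \<Rightarrow> nat \<Rightarrow> real" where
  "lap L \<alpha> i = \<alpha> ((i + L - 1) mod L) - 2 * \<alpha> (i mod L) + \<alpha> ((i + 1) mod L)"

text \<open>Nearest integer: round (ties, a null event here, are rounded up).\<close>
definition omega :: "nat \<Rightarrow> (nat \<Rightarrow> real) \<Rightarrow> nat \<Rightarrow> real" where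
  "omega L \<alpha> i = lap L \<alpha> i - of_int (round (lap L \<alpha> i))"

definition Ssum :: "nat \<Rightarrow> (nat \<Rightarrow> real) \<Rightarrow> int" where
  "Ssum L \<alpha> = (\<Sum>i<L. round (lap L \<alpha> i))"

text \<open>The sorting permutation: sigma a is the index with the a-th smallest omega
  (stable sort; ties only on a null set).\<close>
definition sigma :: "nat \<Rightarrow> (nat \<Rightarrow> real) \<Rightarrow> nat \<Rightarrow> nat" where
  "sigma L \<alpha> a = sort_key (omega L \<alpha>) [0..<L] ! a"

definition Jp :: "nat \<Rightarrow> (nat \<Rightarrow> real) \<Rightarrow> nat \<Rightarrow> int" where
  "Jp L \<alpha> i =
     (if Ssum L \<alpha> < 0 then
        - (if i \<in> sigma L \<alpha> ` {L - nat \<bar>Ssum L \<alpha>\<bar> ..< L} then 1 else 0)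
      else if Ssum L \<alpha> = 0 then 0
      else (if i \<in> sigma L \<alpha> ` {..< nat (Ssum L \<alpha>)} then 1 else 0))"

definition dval :: "nat \<Rightarrow> (nat \<Rightarrow> real) \<Rightarrow> nat" where
  "dval L \<alpha> = nat ((\<Sum>i<L. int i * (round (lap L \<alpha> i) - Jp L \<alpha> i)) mod int L)"

definition alpha_space :: "nat \<Rightarrow> (nat \<Rightarrow> real) measure" where
  "alpha_space L = PiM {..<L} (\<lambda>_. uniform_measure lborel {-1/2 <..< 1/2 :: real})"

end

theory Submission
  imports Defs
begin

text \<open>
  Rotate the \<open>j\<close>-th coordinate by \<open>j/L\<close> on the circle \<open>\<real>/\<int>\<close>, represented by \<open>[-1/2, 1/2)\<close>.
  This preserves the uniform product measure, and it changes every \<open>\<Delta>\<alpha>\<^sub>i\<close> by an integer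
  \<open>z\<^sub>i\<close> with \<open>\<Sum>z\<^sub>i = 0\<close> (the Laplacian of the sawtooth \<open>j/L\<close> minus that of the wrap-around
  counts). Hence \<open>\<omega>\<close>, \<open>S\<close>, \<open>\<sigma>\<close> and \<open>J'\<close> are unchanged, while \<open>\<Sum> i z\<^sub>i \<equiv> 1 (mod L)\<close>, so
  \<open>d\<close> moves to \<open>d + 1 mod L\<close>. The events \<open>{d = k, \<omega> \<in> B}\<close>, \<open>k < L\<close>, are therefore all
  equally likely.
\<close>

section \<open>Integer perturbations of the Laplacian\<close>

lemma round_add_of_int: "round (x + of_int z :: real) = round x + z"
  by (intro round_unique) (use of_int_round_gt[of x] of_int_round_le[of x] in auto)

context
  fixes L :: nat and \<alpha> \<beta> :: "nat \<Rightarrow> real" and z :: "nat \<Rightarrow> int"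
  assumes lap_perturbed: "\<And>i. lap L \<beta> i = lap L \<alpha> i + of_int (z i)"
    and sum_perturbation: "(\<Sum>i<L. z i) = 0"
begin

lemma round_lap_perturbed: "round (lap L \<beta> i) = round (lap L \<alpha> i) + z i"
  by (simp add: lap_perturbed round_add_of_int)

lemma omega_perturbed: "omega L \<beta> = omega L \<alpha>"
  unfolding omega_def round_lap_perturbed by (simp add: lap_perturbed)

lemma Jp_perturbed: "Jp L \<beta> = Jp L \<alpha>"
proof -
  have "Ssum L \<beta> = Ssum L \<alpha>"
    by (simp add: Ssum_def round_lap_perturbed sum.distrib sum_perturbation)
  moreover have "sigma L \<beta> = sigma L \<alpha>"
    unfolding Defs.sigma_def omega_perturbed ..
  ultimately show ?thesis
    by (simp add: fun_eq_iff Jp_def)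
qed

lemma dval_perturbed: "int (dval L \<beta>) = (int (dval L \<alpha>) + (\<Sum>i<L. int i * z i)) mod int L"
proof -
  have "(\<Sum>i<L. int i * (round (lap L \<beta> i) - Jp L \<beta> i))
      = (\<Sum>i<L. int i * (round (lap L \<alpha> i) - Jp L \<alpha> i)) + (\<Sum>i<L. int i * z i)"
    by (simp add: sum.distrib[symmetric] round_lap_perturbed Jp_perturbed algebra_simps)
  then show ?thesis
    by (cases "L = 0") (simp_all add: dval_def mod_add_left_eq)
qed

end

lemma cyclic_pred_succ: "(k::nat) < L \<Longrightarrow> ((k + 1) mod L + L - 1) mod L = k"
  by (cases "k + 1 = L") (auto simp: mod_if)

lemma cyclic_succ_pred: "(k::nat) < L \<Longrightarrow> ((k + L - 1) mod L + 1) mod L = k"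
  by (cases "k = 0") (auto simp: mod_if)

lemma bij_betw_cyclic_succ: "bij_betw (\<lambda>i. (i + 1) mod L) {..<L::nat} {..<L}"
  by (rule bij_betw_byWitness[where f' = "\<lambda>i. (i + L - 1) mod L"])
     (auto simp: cyclic_pred_succ[simplified] cyclic_succ_pred[simplified])

lemma bij_betw_cyclic_pred: "bij_betw (\<lambda>i. (i + L - 1) mod L) {..<L::nat} {..<L}"
  by (rule bij_betw_byWitness[where f' = "\<lambda>i. (i + 1) mod L"])
     (auto simp: cyclic_pred_succ[simplified] cyclic_succ_pred[simplified])

lemma sum_cyclic_succ: "(\<Sum>i<L::nat. g ((i + 1) mod L)) = (\<Sum>i<L. g i)"
  by (rule sum.reindex_bij_betw[OF bij_betw_cyclic_succ])

lemma sum_cyclic_pred: "(\<Sum>i<L::nat. g ((i + L - 1) mod L)) = (\<Sum>i<L. g i)"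
  by (rule sum.reindex_bij_betw[OF bij_betw_cyclic_pred])

definition lap_int :: "nat \<Rightarrow> (nat \<Rightarrow> int) \<Rightarrow> nat \<Rightarrow> int" where
  "lap_int L f i = f ((i + L - 1) mod L) - 2 * f (i mod L) + f ((i + 1) mod L)"

lemma sum_mult_lap_int_commute: "(\<Sum>i<L. g i * lap_int L f i) = (\<Sum>i<L. f i * lap_int L g i)"
proof -
  have "(\<Sum>i<L. g i * f ((i + L - 1) mod L)) = (\<Sum>i<L. g ((i + 1) mod L) * f i)"
    by (subst sum_cyclic_succ[symmetric]) (auto intro!: sum.cong simp: cyclic_pred_succ[simplified])
  moreover have "(\<Sum>i<L. g i * f ((i + 1) mod L)) = (\<Sum>i<L. g ((i + L - 1) mod L) * f i)"
    by (subst sum_cyclic_pred[symmetric]) (auto intro!: sum.cong simp: cyclic_succ_pred[simplified])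
  ultimately show ?thesis
    by (simp add: lap_int_def algebra_simps sum.distrib sum_subtractf sum_distrib_left)
qed

text \<open>The Laplacian of the sawtooth \<open>j/L\<close> on the cycle: only the jump between \<open>L - 1\<close> and \<open>0\<close> contributes.\<close>

definition seam :: "nat \<Rightarrow> nat \<Rightarrow> int" where
  "seam L i = of_bool (i mod L = 0) - of_bool (i mod L = L - 1)"

lemma sum_mult_seam: "L \<ge> 1 \<Longrightarrow> (\<Sum>i<L. f i * seam L i) = f 0 - f (L - 1)"
  by (simp add: seam_def algebra_simps sum_subtractf)

lemma lap_int_of_nat:
  assumes "L \<ge> 1"
  shows "lap_int L (\<lambda>j. int j) i = int L * seam L i"
proof -
  define k where "k = i mod L"
  have k: "k < L"
    using assms by (simp add: k_def)
  have "(i + L - 1) mod L = (k + L - 1) mod L"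
    using assms unfolding k_def by (metis Nat.add_diff_assoc mod_add_left_eq)
  moreover have "(i + 1) mod L = (k + 1) mod L"
    unfolding k_def by (simp add: mod_Suc_eq)
  ultimately have "lap_int L (\<lambda>j. int j) i
      = int ((k + L - 1) mod L) - 2 * int k + int ((k + 1) mod L)"
    by (simp add: lap_int_def k_def)
  also have "\<dots> = int L * seam L i"
  proof -
    consider "L = 1" | "L \<ge> 2" "k = 0" | "L \<ge> 2" "k = L - 1" | "0 < k" "k < L - 1"
      using assms k by linarith
    then show ?thesis
    proof cases
      case 1
      then show ?thesis using k by (simp add: seam_def)
    next
      case 2
      then show ?thesis by (simp add: seam_def k_def[symmetric] of_nat_diff)
    next
      case 3
      then have "(k + L - 1) mod L = L - 2" "(k + 1) mod L = 0"
        by (simp_all add: mod_if)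
      with 3 show ?thesis by (simp add: seam_def k_def[symmetric] of_nat_diff)
    next
      case 4
      then have "(k + L - 1) mod L = k - 1" "(k + 1) mod L = k + 1"
        by (auto simp: mod_if)
      with 4 show ?thesis by (simp add: seam_def k_def[symmetric] of_nat_diff)
    qed
  qed
  finally show ?thesis .
qed

lemma sum_lap_int: "(\<Sum>i<L. lap_int L f i) = 0"
  using sum_mult_lap_int_commute[of "\<lambda>_. 1" L f] by (simp add: lap_int_def)

lemma sum_of_nat_mult_lap_int:
  "L \<ge> 1 \<Longrightarrow> (\<Sum>i<L. int i * lap_int L f i) = int L * (f 0 - f (L - 1))"
  by (simp add: sum_mult_lap_int_commute lap_int_of_nat mult.left_commute
      sum_distrib_left[symmetric] sum_mult_seam)

lemma sum_seam: "L \<ge> 1 \<Longrightarrow> (\<Sum>i<L. seam L i) = 0"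
  using sum_mult_seam[of L "\<lambda>_. 1"] by simp

lemma lap_cong: "L \<ge> 1 \<Longrightarrow> (\<And>j. j < L \<Longrightarrow> f j = g j) \<Longrightarrow> lap L f i = lap L g i"
  by (simp add: lap_def)

lemma lap_add: "lap L (\<lambda>j. f j + g j) i = lap L f i + lap L g i"
  by (simp add: lap_def)

lemma lap_diff: "lap L (\<lambda>j. f j - g j) i = lap L f i - lap L g i"
  by (simp add: lap_def)

lemma lap_divide: "lap L (\<lambda>j. f j / c) i = lap L f i / c"
  by (simp add: lap_def diff_divide_distrib add_divide_distrib)

lemma lap_of_int: "lap L (\<lambda>j. of_int (f j)) i = of_int (lap_int L f i)"
  by (simp add: lap_def lap_int_def)

lemma lap_sawtooth:
  assumes "L \<ge> 1"
  shows "lap L (\<lambda>j. real j / real L) i = of_int (seam L i)"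
proof -
  have "lap L (\<lambda>j. real j / real L) i = lap L (\<lambda>j. of_int (int j)) i / real L"
    by (simp add: lap_divide)
  also have "\<dots> = of_int (seam L i)"
    using assms lap_of_int[of L "\<lambda>j. int j" i] by (simp add: lap_int_of_nat)
  finally show ?thesis .
qed

section \<open>The rotation\<close>

definition wrap_shift :: "real \<Rightarrow> real \<Rightarrow> real" where
  "wrap_shift c x = (if x + c < 1/2 then x + c else x + c - 1)"

definition rotation :: "nat \<Rightarrow> (nat \<Rightarrow> real) \<Rightarrow> nat \<Rightarrow> real" where
  "rotation L \<alpha> = (\<lambda>j\<in>{..<L}. wrap_shift (real j / real L) (\<alpha> j))"

lemma lap_rotation:
  assumes "L \<ge> 1"
  obtains n where "\<And>i. lap L (rotation L \<alpha>) i = lap L \<alpha> i + of_int (seam L i - lap_int L n i)"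
proof -
  define n where "n j = (if \<alpha> j + real j / real L < 1/2 then 0 else 1 :: int)" for j
  have "lap L (rotation L \<alpha>) i = lap L (\<lambda>j. \<alpha> j + real j / real L - of_int (n j)) i" for i
    by (rule lap_cong[OF assms]) (simp add: rotation_def wrap_shift_def n_def)
  then show thesis
    by (intro that) (simp add: lap_add lap_diff lap_sawtooth[OF assms] lap_of_int)
qed

lemma sum_seam_minus_lap_int: "L \<ge> 1 \<Longrightarrow> (\<Sum>i<L. seam L i - lap_int L n i) = 0"
  by (simp add: sum_subtractf sum_seam sum_lap_int)

lemma omega_rotation:
  assumes "L \<ge> 1"
  shows "omega L (rotation L \<alpha>) = omega L \<alpha>"
proof -
  obtain n where "\<And>i. lap L (rotation L \<alpha>) i = lap L \<alpha> i + of_int (seam L i - lap_int L n i)"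
    using lap_rotation[OF assms] by blast
  from omega_perturbed[OF this sum_seam_minus_lap_int[OF assms]] show ?thesis .
qed

lemma dval_rotation:
  assumes "L \<ge> 1"
  shows "dval L (rotation L \<alpha>) = Suc (dval L \<alpha>) mod L"
proof -
  obtain n where lap_rot: "\<And>i. lap L (rotation L \<alpha>) i = lap L \<alpha> i + of_int (seam L i - lap_int L n i)"
    using lap_rotation[OF assms] by blast
  have "(\<Sum>i<L. int i * (seam L i - lap_int L n i)) = 1 + int L * (n (L - 1) - n 0 - 1)"
    using assms by (simp add: right_diff_distrib sum_subtractf sum_mult_seam sum_of_nat_mult_lap_int
        of_nat_diff algebra_simps)
  then have "int (dval L (rotation L \<alpha>)) = (int (dval L \<alpha>) + 1) mod int L"
    using dval_perturbed[OF lap_rot sum_seam_minus_lap_int[OF assms]] by (simp add: add.assoc[symmetric])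
  then show ?thesis
    by (metis of_nat_Suc of_nat_eq_iff of_nat_mod add.commute)
qed

lemma (in prob_space) prob_cyclic_var_inter_invariant:
  fixes X :: "'a \<Rightarrow> nat"
  assumes T: "T \<in> measurable M M" "distr M M T = M"
    and X: "X \<in> measurable M (count_space UNIV)"
      "\<And>x. x \<in> space M \<Longrightarrow> X x < n" "\<And>x. x \<in> space M \<Longrightarrow> X (T x) = Suc (X x) mod n"
    and E: "E \<in> events" "\<And>x. x \<in> space M \<Longrightarrow> T x \<in> E \<longleftrightarrow> x \<in> E"
  shows "prob {x \<in> E. X x \<in> A} = real (card (A \<inter> {..<n})) / real n * prob E"
proof -
  define F where "F k = {x \<in> E. X x = k}" for k
  have E_space: "E \<subseteq> space M"
    using E(1) sets.sets_into_space by blast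
  have F_events: "F k \<in> events" for k
  proof -
    have "F k = E \<inter> (X -` {k} \<inter> space M)"
      using E_space by (auto simp: F_def)
    then show ?thesis
      using E(1) measurable_sets[OF X(1), of "{k}"] by auto
  qed
  have F_Suc: "prob (F (Suc k)) = prob (F k)" if "Suc k < n" for k
  proof -
    have "X (T x) = Suc k \<longleftrightarrow> X x = k" if "x \<in> space M" for x
      using X(2,3)[OF that] \<open>Suc k < n\<close> by (cases "Suc (X x) = n") auto
    then have "T -` F (Suc k) \<inter> space M = F k"
      using E_space E(2) by (auto simp: F_def)
    then show ?thesis
      using measure_distr[OF T(1) F_events[of "Suc k"]] T(2) by simp
  qed
  have F_disjoint: "disjoint_family F"
    by (auto simp: disjoint_family_on_def F_def)
  have F_const: "prob (F k) = prob (F 0)" if "k < n" for k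
    using that by (induction k) (simp_all add: F_Suc)
  have prob_X_in: "prob {x \<in> E. X x \<in> B} = real (card (B \<inter> {..<n})) * prob (F 0)" for B
  proof -
    have "{x \<in> E. X x \<in> B} = (\<Union>k\<in>B \<inter> {..<n}. F k)"
      using E_space X(2) by (auto simp: F_def)
    also have "prob \<dots> = (\<Sum>k\<in>B \<inter> {..<n}. prob (F k))"
      using F_events disjoint_family_on_mono[OF subset_UNIV F_disjoint]
      by (intro finite_measure_finite_Union) (simp_all add: image_subset_iff)
    also have "\<dots> = (\<Sum>k\<in>B \<inter> {..<n}. prob (F 0))"
      by (intro sum.cong refl F_const) simp
    finally show ?thesis
      by simp
  qed
  obtain x where "x \<in> space M"
    using not_empty by blast
  then have "0 < n"
    using X(2) by fastforce
  with prob_X_in[of UNIV] have "prob (F 0) = prob E / real n"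
    by simp
  with prob_X_in[of A] show ?thesis
    by simp
qed

lemma (in prob_space) emeasure_distr_eq_prob:
  "f \<in> measurable M N \<Longrightarrow> A \<in> sets N \<Longrightarrow> emeasure (distr M N f) A = prob {x \<in> space M. f x \<in> A}"
proof -
  assume f: "f \<in> measurable M N" and A: "A \<in> sets N"
  have "f -` A \<inter> space M = {x \<in> space M. f x \<in> A}"
    by blast
  with emeasure_distr[OF f A] show ?thesis
    by (simp add: emeasure_eq_measure)
qed

lemma (in prob_space) distr_pair_eq_pair_measureI:
  assumes X: "X \<in> measurable M S" and Y: "Y \<in> measurable M T"
    and indep: "\<And>A B. A \<in> sets S \<Longrightarrow> B \<in> sets T \<Longrightarrow>
      prob {x \<in> space M. X x \<in> A \<and> Y x \<in> B} = prob {x \<in> space M. X x \<in> A} * prob {x \<in> space M. Y x \<in> B}"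
  shows "distr M S X \<Otimes>\<^sub>M distr M T Y = distr M (S \<Otimes>\<^sub>M T) (\<lambda>x. (X x, Y x))"
proof (rule pair_measure_eqI)
  show "sigma_finite_measure (distr M S X)"
    using X by (intro prob_space_imp_sigma_finite prob_space_distr)
  show "sigma_finite_measure (distr M T Y)"
    using Y by (intro prob_space_imp_sigma_finite prob_space_distr)
  show "sets (distr M S X \<Otimes>\<^sub>M distr M T Y) = sets (distr M (S \<Otimes>\<^sub>M T) (\<lambda>x. (X x, Y x)))"
    by (simp only: sets_distr) (rule sets_pair_measure_cong; simp)
next
  fix A B assume "A \<in> sets (distr M S X)" "B \<in> sets (distr M T Y)"
  then have A: "A \<in> sets S" and B: "B \<in> sets T"
    by simp_all
  have XY: "(\<lambda>x. (X x, Y x)) \<in> measurable M (S \<Otimes>\<^sub>M T)"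
    using X Y by (rule measurable_Pair)
  have "emeasure (distr M S X) A * emeasure (distr M T Y) B
      = ennreal (prob {x \<in> space M. X x \<in> A} * prob {x \<in> space M. Y x \<in> B})"
    using emeasure_distr_eq_prob[OF X A] emeasure_distr_eq_prob[OF Y B] by (simp add: ennreal_mult'')
  also have "\<dots> = emeasure (distr M (S \<Otimes>\<^sub>M T) (\<lambda>x. (X x, Y x))) (A \<times> B)"
    using emeasure_distr_eq_prob[OF XY pair_measureI[OF A B]] by (simp add: indep[OF A B])
  finally show "emeasure (distr M S X) A * emeasure (distr M T Y) B
      = emeasure (distr M (S \<Otimes>\<^sub>M T) (\<lambda>x. (X x, Y x))) (A \<times> B)" .
qed

lemma measurable_count_space_if_constant_on_fibres:
  fixes f :: "'a \<Rightarrow> 'b::countable"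
  assumes countable_image: "countable (g ` space M)"
    and fibres: "\<And>x. x \<in> space M \<Longrightarrow> {y \<in> space M. g y = g x} \<in> sets M"
    and constant_on_fibres: "\<And>x y. x \<in> space M \<Longrightarrow> y \<in> space M \<Longrightarrow> g y = g x \<Longrightarrow> f y = f x"
  shows "f \<in> measurable M (count_space UNIV)"
  unfolding measurable_count_space_eq2_countable
proof (intro conjI ballI)
  show "f \<in> space M \<rightarrow> UNIV"
    by simp
next
  fix k
  let ?K = "g ` (f -` {k} \<inter> space M)"
  have "f -` {k} \<inter> space M = (\<Union>c\<in>?K. {y \<in> space M. g y = c})"
  proof (intro equalityI subsetI)
    fix y assume "y \<in> (\<Union>c\<in>?K. {y \<in> space M. g y = c})"
    then obtain x where x: "x \<in> space M" "f x = k" and y: "y \<in> space M" "g y = g x"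
      by blast
    then show "y \<in> f -` {k} \<inter> space M"
      using constant_on_fibres[OF x(1) y] by simp
  qed blast
  also have "\<dots> \<in> sets M"
  proof (rule sets.countable_UN'')
    show "countable ?K"
      by (rule countable_subset[OF _ countable_image]) blast
  qed (clarsimp simp: fibres)
  finally show "f -` {k} \<inter> space M \<in> sets M" .
qed

section \<open>The rotation preserves the uniform product measure\<close>

abbreviation centred_uniform :: "real measure" where
  "centred_uniform \<equiv> uniform_measure lborel {-1/2 <..< 1/2}"

lemma prob_space_alpha_space: "prob_space (alpha_space L)"
  unfolding alpha_space_def by (intro prob_space_PiM prob_space_uniform_measure) auto

lemma emeasure_lborel_translate:
  assumes "B \<in> sets borel"
  shows "emeasure lborel ((\<lambda>x. x + c) -` B) = emeasure lborel (B :: real set)"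
proof -
  have "emeasure lborel B = emeasure (distr lborel borel ((+) c)) B"
    by (simp add: lborel_distr_plus)
  also have "\<dots> = emeasure lborel ((+) c -` B \<inter> space lborel)"
    using assms by (simp add: emeasure_distr)
  also have "(+) c -` B \<inter> space lborel = (\<lambda>x. x + c) -` B"
    by (auto simp: add.commute)
  finally show ?thesis ..
qed

lemma measurable_wrap_shift[measurable]: "wrap_shift c \<in> borel_measurable borel"
  unfolding wrap_shift_def by measurable

lemma emeasure_lborel_wrap_shift:
  assumes c: "0 \<le> c" "c < 1" and A: "A \<in> sets borel"
  shows "emeasure lborel ({-1/2<..<1/2} \<inter> wrap_shift c -` A) = emeasure lborel ({-1/2<..<1/2} \<inter> A)"
proof -
  let ?A1 = "A \<inter> {c - 1/2 <..< 1/2}" and ?A2 = "A \<inter> {-1/2 ..< c - 1/2}"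
  have split: "{-1/2<..<1/2} \<inter> wrap_shift c -` A = (\<lambda>x. x + c) -` ?A1 \<union> (\<lambda>x. x + (c - 1)) -` ?A2"
    using c by (auto simp: wrap_shift_def add_diff_eq split: if_splits)
  have disjoint: "(\<lambda>x. x + c) -` ?A1 \<inter> (\<lambda>x. x + (c - 1)) -` ?A2 = {}"
    by auto
  have "emeasure lborel ({-1/2<..<1/2} \<inter> wrap_shift c -` A)
      = emeasure lborel ((\<lambda>x. x + c) -` ?A1) + emeasure lborel ((\<lambda>x. x + (c - 1)) -` ?A2)"
    unfolding split using A disjoint by (intro plus_emeasure[symmetric]) auto
  also have "\<dots> = emeasure lborel ?A1 + emeasure lborel ?A2"
    using A emeasure_lborel_translate[of ?A1 c] emeasure_lborel_translate[of ?A2 "c - 1"] by simp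
  also have "\<dots> = emeasure lborel (?A1 \<union> ?A2)"
    using A c by (intro plus_emeasure) auto
  also have "\<dots> = emeasure lborel ((?A1 \<union> ?A2) \<union> (A \<inter> {c - 1/2}))"
    using A by (intro emeasure_Un_null_set[symmetric] null_set_Int1) auto
  also have "(?A1 \<union> ?A2) \<union> (A \<inter> {c - 1/2}) = ({-1/2<..<1/2} \<inter> A) \<union> (A \<inter> {-1/2})"
    using c by auto
  also have "emeasure lborel \<dots> = emeasure lborel ({-1/2<..<1/2} \<inter> A)"
    using A by (intro emeasure_Un_null_set null_set_Int1) auto
  finally show ?thesis .
qed

lemma emeasure_centred_uniform_wrap_shift:
  assumes "0 \<le> c" "c < 1" and A: "A \<in> sets borel"
  shows "emeasure centred_uniform (wrap_shift c -` A) = emeasure centred_uniform A"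
  using A measurable_sets[OF measurable_wrap_shift A] emeasure_lborel_wrap_shift[OF assms]
  by (simp add: Int_commute)

lemma measurable_rotation: "rotation L \<in> measurable (alpha_space L) (alpha_space L)"
  unfolding alpha_space_def rotation_def by measurable

lemma distr_rotation_alpha_space: "distr (alpha_space L) (alpha_space L) (rotation L) = alpha_space L"
proof -
  interpret product_prob_space "\<lambda>_::nat. centred_uniform"
    by (intro product_prob_spaceI prob_space_uniform_measure) auto
  show ?thesis
    unfolding alpha_space_def
  proof (rule PiM_eqI)
    fix A assume A: "\<And>i. i \<in> {..<L} \<Longrightarrow> A i \<in> sets centred_uniform"
    have preimage: "rotation L -` PiE {..<L} A \<inter> space (PiM {..<L} (\<lambda>_. centred_uniform))
        = PiE {..<L} (\<lambda>i. wrap_shift (real i / real L) -` A i)"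
      by (auto simp: rotation_def space_PiM PiE_def Pi_def extensional_def)
    have "emeasure (distr (PiM {..<L} (\<lambda>_. centred_uniform)) (PiM {..<L} (\<lambda>_. centred_uniform))
          (rotation L)) (PiE {..<L} A)
        = emeasure (PiM {..<L} (\<lambda>_. centred_uniform))
            (rotation L -` PiE {..<L} A \<inter> space (PiM {..<L} (\<lambda>_. centred_uniform)))"
      using A measurable_rotation[of L] unfolding alpha_space_def
      by (intro emeasure_distr) (auto intro!: sets_PiM_I_finite)
    also have "\<dots> = (\<Prod>i<L. emeasure centred_uniform (wrap_shift (real i / real L) -` A i))"
      unfolding preimage using A measurable_sets[OF measurable_wrap_shift] by (intro emeasure_PiM) auto
    also have "\<dots> = (\<Prod>i<L. emeasure centred_uniform (A i))"
      using A by (intro prod.cong refl emeasure_centred_uniform_wrap_shift) auto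
    finally show "emeasure (distr (PiM {..<L} (\<lambda>_. centred_uniform)) (PiM {..<L} (\<lambda>_. centred_uniform))
          (rotation L)) (PiE {..<L} A) = (\<Prod>i\<in>{..<L}. emeasure centred_uniform (A i))"
      by simp
  qed simp_all
qed

section \<open>Measurability and distribution of \<open>d\<close>\<close>

lemma measurable_round[measurable]: "(round :: real \<Rightarrow> int) \<in> measurable borel (count_space UNIV)"
proof -
  have round_floor: "round = (\<lambda>x::real. floor (x + 1/2))"
    by (auto simp: round_def)
  show ?thesis
    unfolding round_floor by measurable
qed

lemma pred_constant[measurable]: "Measurable.pred M (\<lambda>x. c)"
  by (cases c) simp_all

lemma measurable_alpha_space_component: "j < L \<Longrightarrow> (\<lambda>\<alpha>. \<alpha> j) \<in> borel_measurable (alpha_space L)"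
  unfolding alpha_space_def by measurable

text \<open>\<open>d\<close> depends only on these finitely many integers and order relations.\<close>

definition dval_key :: "nat \<Rightarrow> (nat \<Rightarrow> real) \<Rightarrow> (nat \<Rightarrow> int) \<times> (nat \<times> nat \<Rightarrow> bool)" where
  "dval_key L \<alpha> = (restrict (\<lambda>i. round (lap L \<alpha> i)) {..<L},
     restrict (\<lambda>(i, j). omega L \<alpha> i \<le> omega L \<alpha> j) ({..<L} \<times> {..<L}))"

lemma dval_key_eq_iff:
  "dval_key L \<beta> = dval_key L \<alpha> \<longleftrightarrow> (\<forall>i\<in>{..<L}. round (lap L \<beta> i) = round (lap L \<alpha> i))
     \<and> (\<forall>i\<in>{..<L}. \<forall>j\<in>{..<L}. (omega L \<beta> i \<le> omega L \<beta> j) = (omega L \<alpha> i \<le> omega L \<alpha> j))"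
  by (auto simp: dval_key_def fun_eq_iff restrict_def split: if_splits)

lemma countable_range_dval_key: "countable (range (dval_key L))"
proof (rule countable_subset)
  show "range (dval_key L) \<subseteq> (\<Pi>\<^sub>E i\<in>{..<L}. UNIV) \<times> (\<Pi>\<^sub>E ij\<in>{..<L} \<times> {..<L}. UNIV)"
    by (simp add: dval_key_def image_subset_iff)
  show "countable ((\<Pi>\<^sub>E i\<in>{..<L}. UNIV :: int set) \<times> (\<Pi>\<^sub>E ij\<in>{..<L} \<times> {..<L}. UNIV :: bool set))"
    by (intro countable_SIGMA countable_PiE) auto
qed

lemma insort_key_eq_if_same_order:
  assumes "\<forall>x\<in>set (a # ys). \<forall>y\<in>set (a # ys). f x \<le> f y \<longleftrightarrow> g x \<le> g y"
  shows "insort_key f a ys = insort_key g a ys"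
  using assms by (induction ys) auto

lemma sort_key_eq_if_same_order:
  fixes f :: "'a \<Rightarrow> 'b::linorder" and g :: "'a \<Rightarrow> 'c::linorder"
  assumes "\<forall>x\<in>set xs. \<forall>y\<in>set xs. f x \<le> f y \<longleftrightarrow> g x \<le> g y"
  shows "sort_key f xs = sort_key g xs"
  using assms
proof (induction xs)
  case (Cons a xs)
  then have "sort_key f xs = sort_key g xs"
    by simp
  moreover have "insort_key f a (sort_key g xs) = insort_key g a (sort_key g xs)"
    using Cons.prems by (intro insort_key_eq_if_same_order) (simp add: set_sort)
  ultimately show ?case
    by simp
qed simp

lemma dval_eq_if_dval_key_eq:
  assumes "dval_key L \<beta> = dval_key L \<alpha>"
  shows "dval L \<beta> = dval L \<alpha>"
proof -
  have round_eq: "\<forall>i<L. round (lap L \<beta> i) = round (lap L \<alpha> i)"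
    and order_eq: "\<forall>i<L. \<forall>j<L. omega L \<beta> i \<le> omega L \<beta> j \<longleftrightarrow> omega L \<alpha> i \<le> omega L \<alpha> j"
    using assms by (simp_all add: dval_key_eq_iff)
  have "Ssum L \<beta> = Ssum L \<alpha>"
    using round_eq by (simp add: Ssum_def)
  moreover have "Defs.sigma L \<beta> = Defs.sigma L \<alpha>"
    unfolding Defs.sigma_def using order_eq by (subst sort_key_eq_if_same_order) auto
  ultimately have "Jp L \<beta> = Jp L \<alpha>"
    by (simp add: fun_eq_iff Jp_def)
  with round_eq show ?thesis
    by (simp add: dval_def)
qed

context
  fixes L :: nat
  assumes L: "L \<ge> 1"
begin

lemma measurable_lap[measurable]: "(\<lambda>\<alpha>. lap L \<alpha> i) \<in> borel_measurable (alpha_space L)"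
  unfolding lap_def using L by (intro borel_measurable_add borel_measurable_diff borel_measurable_times
      borel_measurable_const measurable_alpha_space_component) simp_all

lemma measurable_omega[measurable]: "(\<lambda>\<alpha>. omega L \<alpha> i) \<in> borel_measurable (alpha_space L)"
  unfolding omega_def by measurable

lemma pred_omega_le[measurable]: "Measurable.pred (alpha_space L) (\<lambda>\<alpha>. omega L \<alpha> i \<le> omega L \<alpha> j)"
  unfolding Measurable.pred_def by (intro borel_measurable_le measurable_omega)

lemma sets_dval_key_fibre: "{\<beta> \<in> space (alpha_space L). dval_key L \<beta> = dval_key L \<alpha>} \<in> sets (alpha_space L)"
proof -
  define r where "r i = round (lap L \<alpha> i)" for i
  define c where "c i j = (omega L \<alpha> i \<le> omega L \<alpha> j)" for i j
  have "{\<beta> \<in> space (alpha_space L). dval_key L \<beta> = dval_key L \<alpha>}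
      = {\<beta> \<in> space (alpha_space L). (\<forall>i\<in>{..<L}. round (lap L \<beta> i) = r i)
          \<and> (\<forall>i\<in>{..<L}. \<forall>j\<in>{..<L}. (omega L \<beta> i \<le> omega L \<beta> j) = c i j)}"
    by (simp add: dval_key_eq_iff r_def c_def)
  also have "\<dots> \<in> sets (alpha_space L)"
    by measurable
  finally show ?thesis .
qed

lemma measurable_dval: "dval L \<in> measurable (alpha_space L) (count_space UNIV)"
  by (rule measurable_count_space_if_constant_on_fibres[where g = "dval_key L"])
    (auto intro: countable_subset[OF _ countable_range_dval_key] sets_dval_key_fibre dval_eq_if_dval_key_eq)

lemma dval_less: "dval L \<alpha> < L"
  using L by (simp add: dval_def nat_less_iff)

lemma measurable_restrict_omega:
  "(\<lambda>\<alpha>. restrict (omega L \<alpha>) {..<L}) \<in> measurable (alpha_space L) (PiM {..<L} (\<lambda>_. borel))"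
  by measurable

lemma prob_dval_omega:
  assumes "B \<in> sets (PiM {..<L} (\<lambda>_. borel))"
  shows "measure (alpha_space L) {\<alpha> \<in> space (alpha_space L). dval L \<alpha> \<in> A \<and> restrict (omega L \<alpha>) {..<L} \<in> B}
    = real (card (A \<inter> {..<L})) / real L * measure (alpha_space L) {\<alpha> \<in> space (alpha_space L). restrict (omega L \<alpha>) {..<L} \<in> B}"
proof -
  interpret prob_space "alpha_space L"
    by (rule prob_space_alpha_space)
  let ?E = "{\<alpha> \<in> space (alpha_space L). restrict (omega L \<alpha>) {..<L} \<in> B}"
  have E_events: "?E \<in> events"
    using measurable_sets[OF measurable_restrict_omega assms] by (simp add: vimage_def Int_def conj_commute)
  have E_invariant: "rotation L \<alpha> \<in> ?E \<longleftrightarrow> \<alpha> \<in> ?E" if "\<alpha> \<in> space (alpha_space L)" for \<alpha>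
    using that measurable_space[OF measurable_rotation] by (auto simp: omega_rotation[OF L])
  have "prob {\<alpha> \<in> ?E. dval L \<alpha> \<in> A} = real (card (A \<inter> {..<L})) / real L * prob ?E"
    by (rule prob_cyclic_var_inter_invariant[OF measurable_rotation distr_rotation_alpha_space measurable_dval
          dval_less dval_rotation[OF L] E_events E_invariant])
  moreover have "{\<alpha> \<in> ?E. dval L \<alpha> \<in> A}
      = {\<alpha> \<in> space (alpha_space L). dval L \<alpha> \<in> A \<and> restrict (omega L \<alpha>) {..<L} \<in> B}"
    by blast
  ultimately show ?thesis
    by simp
qed


lemma prob_dval:
  "measure (alpha_space L) {\<alpha> \<in> space (alpha_space L). dval L \<alpha> \<in> A} = real (card (A \<inter> {..<L})) / real L"
proof -
  have "restrict (omega L \<alpha>) {..<L} \<in> space (PiM {..<L} (\<lambda>_. borel))" for \<alpha>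
    by (simp add: space_PiM)
  with prob_dval_omega[OF sets.top, of A] show ?thesis
    by (simp add: prob_space.prob_space[OF prob_space_alpha_space])
qed

lemma joint_distr_dval_omega:
  "distr (alpha_space L) (count_space UNIV) (dval L)
       \<Otimes>\<^sub>M distr (alpha_space L) (PiM {..<L} (\<lambda>_. borel)) (\<lambda>\<alpha>. restrict (omega L \<alpha>) {..<L})
     = distr (alpha_space L) (count_space UNIV \<Otimes>\<^sub>M PiM {..<L} (\<lambda>_. borel))
         (\<lambda>\<alpha>. (dval L \<alpha>, restrict (omega L \<alpha>) {..<L}))"
  by (rule prob_space.distr_pair_eq_pair_measureI[OF prob_space_alpha_space measurable_dval
        measurable_restrict_omega]) (simp add: prob_dval_omega prob_dval)

end

theorem lemma3:
  fixes L :: nat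
  assumes "L \<ge> 1"
  shows "(\<forall>k<L. measure (alpha_space L) {\<alpha> \<in> space (alpha_space L). dval L \<alpha> = k} = 1 / real L)
       \<and> dval L \<in> measurable (alpha_space L) (count_space UNIV)
       \<and> (\<lambda>\<alpha>. restrict (omega L \<alpha>) {..<L})
            \<in> measurable (alpha_space L) (PiM {..<L} (\<lambda>_. borel))
       \<and> distr (alpha_space L) (count_space UNIV) (dval L)
           \<Otimes>\<^sub>M distr (alpha_space L) (PiM {..<L} (\<lambda>_. borel)) (\<lambda>\<alpha>. restrict (omega L \<alpha>) {..<L})
         = distr (alpha_space L) (count_space UNIV \<Otimes>\<^sub>M PiM {..<L} (\<lambda>_. borel))
             (\<lambda>\<alpha>. (dval L \<alpha>, restrict (omega L \<alpha>) {..<L}))"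
proof -
  have "measure (alpha_space L) {\<alpha> \<in> space (alpha_space L). dval L \<alpha> = k} = 1 / real L" if "k < L" for k
    using prob_dval[OF assms, of "{k}"] that by simp
  then show ?thesis
    using measurable_dval[OF assms] measurable_restrict_omega[OF assms] joint_distr_dval_omega[OF assms]
    by blast
qed

end
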